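(* Let $A$ and $C$ be groups, and let $C$ act on $A$ by automorphisms in such a way that the induced action of $C$ on the abelianization $A/[A,A]$ is trivial. Then for every $m\geq 1$, $$\Gamma_m(A\rtimes C)=\Gamma_m(A)\rtimes\Gamma_m(C)\quad\text{and}\quad D_m(A\rtimes C)=D_m(A)\rtimes D_m(C).$$
   Context: For a group $G$, the lower central series is defined by $\Gamma_1(G)=G$ and $\Gamma_i(G)=[\Gamma_{i-1}(G),G]$ for $i\ge 2$. The rational lower central series is defined by $D_1(G)=G$ and, for $i\geq 2$, $D_i(G)=\{x\in G \mid x^k\in\Gamma_i(G)\text{ for some integer }k\geq 1\}$. Here $A\rtimes C$ is the semidirect product defined by the given action, and $A$, $C$ are viewed as subgroups of it. *)

theory Defs
  imports "HOL-Algebra.Algebra"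
begin

definition commutator_subgroup :: "('a, 'b) monoid_scheme \<Rightarrow> 'a set \<Rightarrow> 'a set \<Rightarrow> 'a set" where
  "commutator_subgroup G H K =
     generate G {h \<otimes>\<^bsub>G\<^esub> k \<otimes>\<^bsub>G\<^esub> inv\<^bsub>G\<^esub> h \<otimes>\<^bsub>G\<^esub> inv\<^bsub>G\<^esub> k | h k. h \<in> H \<and> k \<in> K}"

text \<open>lcs_aux G n is Gamma_(n+1)(G).\<close>
primrec lcs_aux :: "('a, 'b) monoid_scheme \<Rightarrow> nat \<Rightarrow> 'a set" where
  "lcs_aux G 0 = carrier G"
| "lcs_aux G (Suc n) = commutator_subgroup G (lcs_aux G n) (carrier G)"

definition lower_central :: "('a, 'b) monoid_scheme \<Rightarrow> nat \<Rightarrow> 'a set" where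
  "lower_central G i = lcs_aux G (i - 1)"

definition rational_lower_central :: "('a, 'b) monoid_scheme \<Rightarrow> nat \<Rightarrow> 'a set" where
  "rational_lower_central G i =
     (if i \<le> 1 then carrier G
      else {x \<in> carrier G. \<exists>k::nat. k \<ge> 1 \<and> x [^]\<^bsub>G\<^esub> k \<in> lower_central G i})"

text \<open>Semidirect product A \<rtimes> C for an action phi of C on A:
  (a,c)(a',c') = (a * phi c a', c * c').  A is identified with A \<times> {1}, C with {1} \<times> C.\<close>
definition semidirect_product ::
  "('a, 'x) monoid_scheme \<Rightarrow> ('c, 'y) monoid_scheme \<Rightarrow> ('c \<Rightarrow> 'a \<Rightarrow> 'a) \<Rightarrow> ('a \<times> 'c) monoid" where
  "semidirect_product A C \<phi> =
     \<lparr>carrier = carrier A \<times> carrier C,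
      monoid.mult = (\<lambda>(a, c) (a', c'). (a \<otimes>\<^bsub>A\<^esub> \<phi> c a', c \<otimes>\<^bsub>C\<^esub> c')),
      one = (\<one>\<^bsub>A\<^esub>, \<one>\<^bsub>C\<^esub>)\<rparr>"

end

theory Submission
  imports Defs
begin

text \<open>
  Write G = A \<rtimes> C. Since A and C embed in G, \<Gamma>_m(A) \<times> \<Gamma>_m(C) \<subseteq> \<Gamma>_m(G) for any action.
  The reverse inclusion rests on the claim that every c \<in> \<Gamma>_j(C) acts trivially on
  A/\<Gamma>_{j+1}(A); for j = 1 this is the hypothesis on the abelianization. An endomorphism \<sigma>
  of A with \<sigma> x \<equiv> x modulo \<Gamma>_{k+1}(A) satisfies \<sigma> x \<equiv> x modulo \<Gamma>_{m+k}(A) for x \<in> \<Gamma>_m(A);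
  hence such a \<sigma> commutes modulo \<Gamma>_{k+2}(A) with every endomorphism acting trivially on
  A/\<Gamma>_2(A), and the claim follows by induction on j, because \<Gamma>_{j+1}(C) is generated by the
  commutators [c, d] with c \<in> \<Gamma>_j(C). Given the claim, the commutator of an element of
  \<Gamma>_m(A) \<times> \<Gamma>_m(C) with any element of G lies in \<Gamma>_{m+1}(A) \<times> \<Gamma>_{m+1}(C).

  For the rational series, D_m(H) is a subgroup of every group H. In a group generated by
  elements of exponent n, the n-th power map sends \<Gamma>_j into \<Gamma>_{j+1}: modulo \<Gamma>_{j+1} the
  group \<Gamma>_j is central and generated by the images of the homomorphisms g \<mapsto> [u, g] with
  u \<in> \<Gamma>_{j-1}. Applied to the image of \<langle>x, y\<rangle> in H/\<Gamma>_m(H), where x^k and y^l vanish,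
  this gives (x y)^N \<in> \<Gamma>_m(H) for N = (k l)^{m-1}. Hence (a, c) \<in> D_m(G) iff both
  (a, 1) and (1, c) are, i.e. iff a \<in> D_m(A) and c \<in> D_m(C).
\<close>

section \<open>Commutators\<close>

definition commutator :: "('a, 'b) monoid_scheme \<Rightarrow> 'a \<Rightarrow> 'a \<Rightarrow> 'a" where
  "commutator G h k = h \<otimes>\<^bsub>G\<^esub> k \<otimes>\<^bsub>G\<^esub> inv\<^bsub>G\<^esub> h \<otimes>\<^bsub>G\<^esub> inv\<^bsub>G\<^esub> k"

lemma commutator_subgroup_eq_generate:
  "commutator_subgroup G H K = generate G {commutator G h k | h k. h \<in> H \<and> k \<in> K}"
  unfolding commutator_subgroup_def commutator_def ..

context group
begin

lemma mult_inv_cancel_left [simp]: "x \<in> carrier G \<Longrightarrow> y \<in> carrier G \<Longrightarrow> x \<otimes> (inv x \<otimes> y) = y"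
  by (simp add: m_assoc[symmetric])

lemma inv_mult_cancel_left [simp]: "x \<in> carrier G \<Longrightarrow> y \<in> carrier G \<Longrightarrow> inv x \<otimes> (x \<otimes> y) = y"
  by (simp add: m_assoc[symmetric])

lemma commutator_closed [simp]:
  "h \<in> carrier G \<Longrightarrow> k \<in> carrier G \<Longrightarrow> commutator G h k \<in> carrier G"
  unfolding commutator_def by simp

lemma inv_commutator:
  "h \<in> carrier G \<Longrightarrow> k \<in> carrier G \<Longrightarrow> inv (commutator G h k) = commutator G k h"
  unfolding commutator_def by (simp add: inv_mult_group m_assoc)

lemma conj_commutator:
  "g \<in> carrier G \<Longrightarrow> h \<in> carrier G \<Longrightarrow> k \<in> carrier G \<Longrightarrow>
   g \<otimes> commutator G h k \<otimes> inv g = commutator G (g \<otimes> h \<otimes> inv g) (g \<otimes> k \<otimes> inv g)"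
  unfolding commutator_def by (simp add: m_assoc inv_mult_group)

lemma commutator_mult_right:
  "u \<in> carrier G \<Longrightarrow> g \<in> carrier G \<Longrightarrow> h \<in> carrier G \<Longrightarrow>
   commutator G u (g \<otimes> h) = commutator G u g \<otimes> (g \<otimes> commutator G u h \<otimes> inv g)"
  unfolding commutator_def by (simp add: m_assoc inv_mult_group)

lemma commutator_mult_central_commuting:
  assumes "u \<in> carrier G" "z \<in> carrier G" "a \<in> carrier G" "v \<in> carrier G"
    and central: "\<And>g. g \<in> carrier G \<Longrightarrow> u \<otimes> g = g \<otimes> u"
    and commute: "v \<otimes> z = z \<otimes> v"
  shows "commutator G (u \<otimes> z) (a \<otimes> v) = commutator G z a"
proof -
  have vz: "v \<otimes> inv z = inv z \<otimes> v"
    using assms(2,4) commute by (metis inv_closed inv_solve_left' inv_solve_right' m_assoc m_closed)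
  have "commutator G (u \<otimes> z) (a \<otimes> v) = u \<otimes> (z \<otimes> a \<otimes> v \<otimes> inv z) \<otimes> inv u \<otimes> (inv v \<otimes> inv a)"
    using assms(1-4) by (simp add: commutator_def m_assoc inv_mult_group)
  also have "\<dots> = z \<otimes> a \<otimes> (v \<otimes> inv z) \<otimes> (inv v \<otimes> inv a)"
    using assms(1-4) central[of "z \<otimes> a \<otimes> v \<otimes> inv z"] by (simp add: m_assoc)
  also have "\<dots> = commutator G z a"
    using assms(1-4) by (simp add: vz commutator_def m_assoc)
  finally show ?thesis .
qed


lemma commutator_subgroup_mono:
  "S \<subseteq> S' \<Longrightarrow> T \<subseteq> T' \<Longrightarrow> commutator_subgroup G S T \<subseteq> commutator_subgroup G S' T'"
  unfolding commutator_subgroup_eq_generate by (rule mono_generate) blast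

end

lemma (in group_hom) hom_commutator:
  "x \<in> carrier G \<Longrightarrow> y \<in> carrier G \<Longrightarrow> h (commutator G x y) = commutator H (h x) (h y)"
  unfolding commutator_def by simp

lemma (in group_hom) image_commutator_subgroup:
  assumes "S \<subseteq> carrier G" "T \<subseteq> carrier G"
  shows "h ` commutator_subgroup G S T = commutator_subgroup H (h ` S) (h ` T)"
proof -
  have img: "h ` {commutator G x y | x y. x \<in> S \<and> y \<in> T} = {commutator H x y | x y. x \<in> h ` S \<and> y \<in> h ` T}"
    using assms by (auto simp: image_iff) (metis hom_commutator subsetD)+
  have "{commutator G x y | x y. x \<in> S \<and> y \<in> T} \<subseteq> carrier G"
    using assms by (auto simp: subset_iff)
  from generate_img[OF this] show ?thesis
    unfolding commutator_subgroup_eq_generate img by simp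
qed

lemma subgroup_equalizer:
  assumes "group G" "group H" "f \<in> hom G H" "g \<in> hom G H"
  shows "subgroup {x \<in> carrier G. f x = g x} G"
proof -
  interpret f: group_hom G H f
    using assms by (simp add: group_hom_def group_hom_axioms_def)
  interpret g: group_hom G H g
    using assms by (simp add: group_hom_def group_hom_axioms_def)
  show ?thesis
    by (rule f.G.subgroupI) auto
qed

context normal
begin

lemma rcos_eq_iff: "x \<in> carrier G \<Longrightarrow> y \<in> carrier G \<Longrightarrow> H #> x = H #> y \<longleftrightarrow> x \<otimes> inv y \<in> H"
  by (metis is_group rcos_module rcos_self repr_independence repr_independenceD subgroup_axioms)

lemma rcos_eq_self_iff: "x \<in> carrier G \<Longrightarrow> H #> x = H \<longleftrightarrow> x \<in> H"
  using rcos_eq_iff[of x \<one>] by (simp add: coset_mult_one subset)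

lemma rcos_mult_commute_iff:
  "x \<in> carrier G \<Longrightarrow> y \<in> carrier G \<Longrightarrow> H #> (x \<otimes> y) = H #> (y \<otimes> x) \<longleftrightarrow> commutator G x y \<in> H"
  by (simp add: rcos_eq_iff commutator_def inv_mult_group m_assoc)

lemma rcos_mult_cong:
  assumes "x \<in> carrier G" "x' \<in> carrier G" "y \<in> carrier G" "y' \<in> carrier G"
    and "H #> x = H #> x'" "H #> y = H #> y'"
  shows "H #> (x \<otimes> y) = H #> (x' \<otimes> y')"
  using assms by (metis rcos_sum)

lemma rcos_eqE:
  assumes "x \<in> carrier G" "H #> x = H #> y"
  obtains u where "u \<in> H" "x = u \<otimes> y"
  using rcos_self[OF assms(1) subgroup_axioms] assms(2) unfolding r_coset_def by auto

lemma rcos_eqE':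
  assumes "x \<in> carrier G" "y \<in> carrier G" "H #> x = H #> y"
  obtains v where "v \<in> H" "x = y \<otimes> v"
  using rcos_self[OF assms(1) subgroup_axioms] assms(2,3) coset_eq unfolding l_coset_def by auto

lemma subgroup_rcos_fixed:
  assumes "\<sigma> \<in> hom G G"
  shows "subgroup {x \<in> carrier G. H #> \<sigma> x = H #> x} G"
  using subgroup_equalizer[OF is_group factorgroup_is_group
      Group.hom_compose[OF assms r_coset_hom_Mod] r_coset_hom_Mod]
  by simp

lemma rcos_commutator_mult_central_commuting:
  assumes "u \<in> carrier G" "y \<in> carrier G" "a \<in> carrier G" "v \<in> carrier G"
    and central: "\<And>g. g \<in> carrier G \<Longrightarrow> commutator G u g \<in> H"
    and commute: "commutator G v y \<in> H"
  shows "H #> commutator G (u \<otimes> y) (a \<otimes> v) = H #> commutator G y a"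
proof -
  interpret Q: group "G Mod H"
    by (rule factorgroup_is_group)
  have q: "group_hom G (G Mod H) (\<lambda>x. H #> x)"
    by (simp add: group_hom_def group_hom_axioms_def is_group Q.is_group r_coset_hom_Mod)
  have closed: "H #> x \<in> carrier (G Mod H)" if "x \<in> carrier G" for x
    using group_hom.hom_closed[OF q that] .
  have Q_central: "(H #> u) \<otimes>\<^bsub>G Mod H\<^esub> Z = Z \<otimes>\<^bsub>G Mod H\<^esub> (H #> u)" if Z: "Z \<in> carrier (G Mod H)" for Z
  proof -
    obtain g where g: "g \<in> carrier G" "Z = H #> g"
      using Z by (auto simp: carrier_FactGroup)
    then show ?thesis
      using rcos_mult_commute_iff[OF assms(1) g(1)] central[OF g(1)] assms(1) by (simp add: rcos_sum)
  qed
  have Q_commute: "(H #> v) \<otimes>\<^bsub>G Mod H\<^esub> (H #> y) = (H #> y) \<otimes>\<^bsub>G Mod H\<^esub> (H #> v)"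
    using rcos_mult_commute_iff[OF assms(4,2)] commute assms(2,4) by (simp add: rcos_sum)
  have "H #> commutator G (u \<otimes> y) (a \<otimes> v) = commutator (G Mod H) (H #> (u \<otimes> y)) (H #> (a \<otimes> v))"
    using assms(1-4) by (simp add: group_hom.hom_commutator[OF q])
  also have "\<dots> = commutator (G Mod H) ((H #> u) \<otimes>\<^bsub>G Mod H\<^esub> (H #> y)) ((H #> a) \<otimes>\<^bsub>G Mod H\<^esub> (H #> v))"
    using assms(1-4) by (simp add: rcos_sum)
  also have "\<dots> = commutator (G Mod H) (H #> y) (H #> a)"
    using assms(1-4) by (intro Q.commutator_mult_central_commuting Q_central Q_commute closed)
  also have "\<dots> = H #> commutator G y a"
    using assms(2,3) by (simp add: group_hom.hom_commutator[OF q])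
  finally show ?thesis .
qed

end

section \<open>The lower central series\<close>

lemma derived_carrier_eq_lcs_aux_1: "derived G (carrier G) = lcs_aux G 1"
  unfolding derived_def
  by (simp add: commutator_subgroup_def, rule arg_cong[where f = "generate G"], blast)

declare lcs_aux.simps(2) [simp del]

context group
begin

lemma lcs_aux_subgroup: "subgroup (lcs_aux G i) G"
proof (induction i)
  case (Suc i)
  then show ?case
    unfolding lcs_aux.simps commutator_subgroup_eq_generate
    by (intro generate_is_subgroup) (auto dest: subgroup.mem_carrier)
qed (simp add: subgroup_self)

lemma lcs_aux_subset: "lcs_aux G i \<subseteq> carrier G"
  using lcs_aux_subgroup by (rule subgroup.subset)

lemma lcs_aux_closed: "x \<in> lcs_aux G i \<Longrightarrow> x \<in> carrier G"
  using lcs_aux_subset by blast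

lemma commutator_in_lcs_aux_Suc:
  "h \<in> lcs_aux G i \<Longrightarrow> k \<in> carrier G \<Longrightarrow> commutator G h k \<in> lcs_aux G (Suc i)"
  unfolding lcs_aux.simps commutator_subgroup_eq_generate by (blast intro: generate.incl)

lemma commutator_in_lcs_aux_Suc':
  assumes "h \<in> carrier G" "k \<in> lcs_aux G i"
  shows "commutator G h k \<in> lcs_aux G (Suc i)"
proof -
  have "inv (commutator G k h) \<in> lcs_aux G (Suc i)"
    using assms by (intro subgroup.m_inv_closed[OF lcs_aux_subgroup] commutator_in_lcs_aux_Suc)
  then show ?thesis
    using assms by (simp add: inv_commutator lcs_aux_closed)
qed

lemma lcs_aux_normal: "lcs_aux G i \<lhd> G"
proof (induction i)
  case (Suc i)
  let ?gens = "{commutator G h k | h k. h \<in> lcs_aux G i \<and> k \<in> carrier G}"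
  have "generate G ?gens \<lhd> G"
  proof (rule normal_generateI)
    show "?gens \<subseteq> carrier G"
      using lcs_aux_closed by (blast intro: commutator_closed)
  next
    fix c g assume "c \<in> ?gens" and g: "g \<in> carrier G"
    then obtain h k where h: "h \<in> lcs_aux G i" and k: "k \<in> carrier G" and c: "c = commutator G h k"
      by blast
    have "g \<otimes> h \<otimes> inv g \<in> lcs_aux G i"
      using Suc h g by (simp add: normal.inv_op_closed2)
    moreover have "g \<otimes> c \<otimes> inv g = commutator G (g \<otimes> h \<otimes> inv g) (g \<otimes> k \<otimes> inv g)"
      using c g h k by (simp add: conj_commutator lcs_aux_closed)
    ultimately show "g \<otimes> c \<otimes> inv g \<in> ?gens"
      using g k by blast
  qed
  then show ?case
    by (simp add: lcs_aux.simps(2) commutator_subgroup_eq_generate)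
qed (simp add: normal_self)

lemma lcs_aux_Suc_subset: "lcs_aux G (Suc i) \<subseteq> lcs_aux G i"
proof -
  have "commutator G h k \<in> lcs_aux G i" if h: "h \<in> lcs_aux G i" and k: "k \<in> carrier G" for h k
  proof -
    have "k \<otimes> inv h \<otimes> inv k \<in> lcs_aux G i"
      by (rule normal.inv_op_closed2[OF lcs_aux_normal k subgroup.m_inv_closed[OF lcs_aux_subgroup h]])
    with h have "h \<otimes> (k \<otimes> inv h \<otimes> inv k) \<in> lcs_aux G i"
      by (rule subgroup.m_closed[OF lcs_aux_subgroup])
    then show ?thesis
      using h k by (simp add: commutator_def m_assoc lcs_aux_closed)
  qed
  then show ?thesis
    unfolding lcs_aux.simps commutator_subgroup_eq_generate
    by (intro generate_subgroup_incl lcs_aux_subgroup) blast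
qed

lemma lcs_aux_central_mod_Suc:
  assumes "h \<in> lcs_aux G i" "g \<in> carrier G"
  shows "lcs_aux G (Suc i) #> (h \<otimes> g) = lcs_aux G (Suc i) #> (g \<otimes> h)"
  using normal.rcos_mult_commute_iff[OF lcs_aux_normal lcs_aux_closed[OF assms(1)] assms(2)]
    commutator_in_lcs_aux_Suc[OF assms] by blast

end

lemma (in group_hom) image_lcs_aux_subset: "h ` lcs_aux G i \<subseteq> lcs_aux H i"
proof (induction i)
  case (Suc i)
  have "h ` lcs_aux G (Suc i) = commutator_subgroup H (h ` lcs_aux G i) (h ` carrier G)"
    by (simp add: lcs_aux.simps(2) image_commutator_subgroup G.lcs_aux_subset)
  also have "\<dots> \<subseteq> lcs_aux H (Suc i)"
    using Suc by (simp add: lcs_aux.simps(2) H.commutator_subgroup_mono image_subsetI)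
  finally show ?case .
qed auto

lemma (in group_hom) image_lcs_aux_eq:
  "h ` carrier G = carrier H \<Longrightarrow> h ` lcs_aux G i = lcs_aux H i"
  by (induction i) (simp_all add: lcs_aux.simps(2) image_commutator_subgroup G.lcs_aux_subset)

section \<open>Endomorphisms acting trivially modulo the lower central series\<close>

definition trivial_mod_lcs :: "('a, 'b) monoid_scheme \<Rightarrow> nat \<Rightarrow> ('a \<Rightarrow> 'a) \<Rightarrow> bool" where
  "trivial_mod_lcs G k \<sigma> \<longleftrightarrow>
     \<sigma> \<in> hom G G \<and> (\<forall>a \<in> carrier G. lcs_aux G k #>\<^bsub>G\<^esub> \<sigma> a = lcs_aux G k #>\<^bsub>G\<^esub> a)"

context group
begin

lemma trivial_mod_lcs_conj:
  assumes v: "v \<in> lcs_aux G k"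
  shows "trivial_mod_lcs G (Suc k) (\<lambda>z. v \<otimes> z \<otimes> inv v)"
proof -
  have vc: "v \<in> carrier G"
    using v by (rule lcs_aux_closed)
  have "lcs_aux G (Suc k) #> (v \<otimes> a \<otimes> inv v) = lcs_aux G (Suc k) #> a" if a: "a \<in> carrier G" for a
    using normal.rcos_eq_iff[OF lcs_aux_normal, of "v \<otimes> a \<otimes> inv v" a] commutator_in_lcs_aux_Suc[OF v a] vc a
    by (simp add: commutator_def)
  moreover have "(\<lambda>z. v \<otimes> z \<otimes> inv v) \<in> hom G G"
    using vc by (auto simp: hom_def m_assoc)
  ultimately show ?thesis
    by (simp add: trivial_mod_lcs_def)
qed

lemma trivial_mod_lcs_right:
  assumes "trivial_mod_lcs G k \<sigma>" "a \<in> carrier G"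
  obtains v where "v \<in> lcs_aux G k" "\<sigma> a = a \<otimes> v"
proof -
  have "\<sigma> a \<in> carrier G" and "lcs_aux G k #> \<sigma> a = lcs_aux G k #> a"
    using assms by (auto simp: trivial_mod_lcs_def hom_in_carrier)
  then show ?thesis
    using normal.rcos_eqE'[OF lcs_aux_normal _ assms(2)] that by blast
qed

lemma trivial_mod_lcs_on_lcs_aux:
  "trivial_mod_lcs G k \<sigma> \<Longrightarrow> x \<in> lcs_aux G m \<Longrightarrow> lcs_aux G (m + k) #> \<sigma> x = lcs_aux G (m + k) #> x"
proof (induction m arbitrary: k \<sigma> x)
  case 0
  then show ?case by (simp add: trivial_mod_lcs_def)
next
  case (Suc m)
  let ?N = "lcs_aux G (Suc (m + k))"
  interpret N: normal ?N G
    by (rule lcs_aux_normal)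
  interpret \<sigma>: group_hom G G \<sigma>
    using Suc.prems(1) by (simp add: group_hom_def group_hom_axioms_def is_group trivial_mod_lcs_def)
  have fixed: "?N #> \<sigma> (commutator G y a) = ?N #> commutator G y a"
    if y: "y \<in> lcs_aux G m" and a: "a \<in> carrier G" for y a
  proof -
    have yc: "y \<in> carrier G"
      using y by (rule lcs_aux_closed)
    obtain u where u: "u \<in> lcs_aux G (m + k)" "\<sigma> y = u \<otimes> y"
      using normal.rcos_eqE[OF lcs_aux_normal _ Suc.IH[OF Suc.prems(1) y]] yc by auto
    obtain v where v: "v \<in> lcs_aux G k" "\<sigma> a = a \<otimes> v"
      using trivial_mod_lcs_right[OF Suc.prems(1) a] .
    have vc: "v \<in> carrier G"
      using v(1) by (rule lcs_aux_closed)
    \<comment> \<open>the induction hypothesis for conjugation by v, which acts trivially modulo one step further\<close>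
    have "?N #> (v \<otimes> y \<otimes> inv v) = ?N #> y"
      using Suc.IH[OF trivial_mod_lcs_conj[OF v(1)] y] by simp
    then have "commutator G v y \<in> ?N"
      using N.rcos_eq_iff vc yc by (simp add: commutator_def)
    moreover have "commutator G u g \<in> ?N" if "g \<in> carrier G" for g
      using commutator_in_lcs_aux_Suc[OF u(1) that] by simp
    ultimately have "?N #> commutator G (u \<otimes> y) (a \<otimes> v) = ?N #> commutator G y a"
      using N.rcos_commutator_mult_central_commuting lcs_aux_closed[OF u(1)] yc a vc by blast
    then show ?thesis
      using u(2) v(2) yc a by (simp add: \<sigma>.hom_commutator)
  qed
  have "lcs_aux G (Suc m) \<subseteq> {z \<in> carrier G. ?N #> \<sigma> z = ?N #> z}"
    unfolding lcs_aux.simps(2)[of G m] commutator_subgroup_eq_generate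
    by (intro generate_subgroup_incl N.subgroup_rcos_fixed \<sigma>.homh) (auto simp: fixed lcs_aux_closed)
  then show ?case
    using Suc.prems(2) by auto
qed

lemma trivial_mod_lcs_commute:
  assumes \<sigma>: "trivial_mod_lcs G k \<sigma>" and \<tau>: "trivial_mod_lcs G 1 \<tau>" and y: "y \<in> carrier G"
  shows "lcs_aux G (Suc k) #> \<sigma> (\<tau> y) = lcs_aux G (Suc k) #> \<tau> (\<sigma> y)"
proof -
  let ?N = "lcs_aux G (Suc k)"
  interpret N: normal ?N G
    by (rule lcs_aux_normal)
  have \<sigma>h: "\<sigma> \<in> hom G G" and \<tau>h: "\<tau> \<in> hom G G"
    using \<sigma> \<tau> by (simp_all add: trivial_mod_lcs_def)
  obtain s where s: "s \<in> lcs_aux G k" "\<sigma> y = y \<otimes> s"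
    using trivial_mod_lcs_right[OF \<sigma> y] .
  obtain t where t: "t \<in> lcs_aux G 1" "\<tau> y = y \<otimes> t"
    using trivial_mod_lcs_right[OF \<tau> y] .
  have sc: "s \<in> carrier G" and tc: "t \<in> carrier G"
    using s(1) t(1) by (simp_all add: lcs_aux_closed)
  have "?N #> \<sigma> t = ?N #> t"
    using trivial_mod_lcs_on_lcs_aux[OF \<sigma> t(1)] by simp
  then have "?N #> (y \<otimes> (s \<otimes> \<sigma> t)) = ?N #> (y \<otimes> (s \<otimes> t))"
    using y sc tc hom_in_carrier[OF \<sigma>h tc] by (intro N.rcos_mult_cong[of y y] N.rcos_mult_cong[of s s]) simp_all
  also have "\<dots> = ?N #> (y \<otimes> (t \<otimes> s))"
    using y sc tc lcs_aux_central_mod_Suc[OF s(1) tc] by (intro N.rcos_mult_cong[of y y]) simp_all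
  also have "?N #> \<tau> s = ?N #> s"
    using trivial_mod_lcs_on_lcs_aux[OF \<tau> s(1)] by simp
  then have "?N #> (y \<otimes> (t \<otimes> s)) = ?N #> (y \<otimes> (t \<otimes> \<tau> s))"
    using y sc tc hom_in_carrier[OF \<tau>h sc] by (intro N.rcos_mult_cong[of y y] N.rcos_mult_cong[of t t]) simp_all
  finally show ?thesis
    using s t y sc tc hom_in_carrier[OF \<sigma>h tc] hom_in_carrier[OF \<tau>h sc]
    by (simp add: hom_mult[OF \<sigma>h] hom_mult[OF \<tau>h] m_assoc)
qed

end

section \<open>Powers and the rational lower central series\<close>

context group
begin

lemma subgroup_nat_pow_closed: "subgroup H G \<Longrightarrow> h \<in> H \<Longrightarrow> h [^] (k::nat) \<in> H"
  using subgroup_int_pow_closed[of H h "int k"] by (simp add: int_pow_int)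

lemma subgroup_power_kernel:
  assumes H: "subgroup H G" and Q: "group Q" and f: "f \<in> hom G Q"
    and commute: "\<And>a b. a \<in> H \<Longrightarrow> b \<in> H \<Longrightarrow> f a \<otimes>\<^bsub>Q\<^esub> f b = f b \<otimes>\<^bsub>Q\<^esub> f a"
  shows "subgroup {a \<in> H. f a [^]\<^bsub>Q\<^esub> (n::nat) = \<one>\<^bsub>Q\<^esub>} G"
proof -
  interpret f: group_hom G Q f
    using Q f by (simp add: group_hom_def group_hom_axioms_def is_group)
  show ?thesis
  proof (rule subgroupI)
    show "{a \<in> H. f a [^]\<^bsub>Q\<^esub> n = \<one>\<^bsub>Q\<^esub>} \<subseteq> carrier G"
      using subgroup.subset[OF H] by blast
    show "{a \<in> H. f a [^]\<^bsub>Q\<^esub> n = \<one>\<^bsub>Q\<^esub>} \<noteq> {}"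
      using subgroup.one_closed[OF H] by auto
  next
    fix a assume "a \<in> {a \<in> H. f a [^]\<^bsub>Q\<^esub> n = \<one>\<^bsub>Q\<^esub>}"
    then show "inv a \<in> {a \<in> H. f a [^]\<^bsub>Q\<^esub> n = \<one>\<^bsub>Q\<^esub>}"
      using H by (auto simp: subgroup.m_inv_closed subgroup.mem_carrier f.H.nat_pow_inv)
  next
    fix a b assume "a \<in> {a \<in> H. f a [^]\<^bsub>Q\<^esub> n = \<one>\<^bsub>Q\<^esub>}" "b \<in> {a \<in> H. f a [^]\<^bsub>Q\<^esub> n = \<one>\<^bsub>Q\<^esub>}"
    then show "a \<otimes> b \<in> {a \<in> H. f a [^]\<^bsub>Q\<^esub> n = \<one>\<^bsub>Q\<^esub>}"
      using H commute by (auto simp: subgroup.m_closed subgroup.mem_carrier f.H.pow_mult_distrib)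
  qed
qed

lemma commutator_hom_mod_lcs_aux:
  assumes u: "u \<in> lcs_aux G j"
  shows "(\<lambda>g. lcs_aux G (Suc (Suc j)) #> commutator G u g) \<in> hom G (G Mod lcs_aux G (Suc (Suc j)))"
proof (rule homI)
  let ?R = "lcs_aux G (Suc (Suc j))"
  interpret R: normal ?R G
    by (rule lcs_aux_normal)
  have uc: "u \<in> carrier G"
    using u by (rule lcs_aux_closed)
  show "?R #> commutator G u g \<in> carrier (G Mod ?R)" if "g \<in> carrier G" for g
    using uc that by (simp add: carrier_FactGroup)
  fix g h assume g: "g \<in> carrier G" and h: "h \<in> carrier G"
  have w: "commutator G u h \<in> lcs_aux G (Suc j)"
    using u h by (rule commutator_in_lcs_aux_Suc)
  then have "?R #> (g \<otimes> commutator G u h \<otimes> inv g) = ?R #> commutator G u h"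
    using R.rcos_eq_iff commutator_in_lcs_aux_Suc'[OF g w] g uc h by (simp add: commutator_def)
  then have "?R #> commutator G u (g \<otimes> h) = ?R #> (commutator G u g \<otimes> commutator G u h)"
    using uc g h by (simp add: commutator_mult_right R.rcos_mult_cong)
  then show "?R #> commutator G u (g \<otimes> h) = (?R #> commutator G u g) \<otimes>\<^bsub>G Mod ?R\<^esub> (?R #> commutator G u h)"
    using uc g h by (simp add: R.rcos_sum)
qed

lemma subgroup_pow_in_lcs_aux_Suc: "subgroup {w \<in> lcs_aux G j. w [^] (n::nat) \<in> lcs_aux G (Suc j)} G"
proof -
  let ?R = "lcs_aux G (Suc j)"
  interpret R: normal ?R G
    by (rule lcs_aux_normal)
  interpret Q: group "G Mod ?R"
    by (rule R.factorgroup_is_group)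
  have "subgroup {w \<in> lcs_aux G j. (?R #> w) [^]\<^bsub>G Mod ?R\<^esub> n = \<one>\<^bsub>G Mod ?R\<^esub>} G"
    using lcs_aux_central_mod_Suc lcs_aux_closed
    by (intro subgroup_power_kernel lcs_aux_subgroup R.r_coset_hom_Mod Q.is_group) (simp add: R.rcos_sum)
  moreover have "{w \<in> lcs_aux G j. (?R #> w) [^]\<^bsub>G Mod ?R\<^esub> n = \<one>\<^bsub>G Mod ?R\<^esub>} = {w \<in> lcs_aux G j. w [^] n \<in> ?R}"
    by (intro Collect_cong conj_cong refl) (simp add: R.FactGroup_pow R.rcos_eq_self_iff lcs_aux_closed)
  ultimately show ?thesis
    by simp
qed

lemma commutator_pow_in_lcs_aux:
  assumes S: "S \<subseteq> carrier G" "generate G S = carrier G" "\<And>x. x \<in> S \<Longrightarrow> x [^] n = \<one>"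
    and u: "u \<in> lcs_aux G j" and g: "g \<in> carrier G"
  shows "commutator G u g [^] (n::nat) \<in> lcs_aux G (Suc (Suc j))"
proof -
  let ?R = "lcs_aux G (Suc (Suc j))"
  interpret R: normal ?R G
    by (rule lcs_aux_normal)
  interpret Q: group "G Mod ?R"
    by (rule R.factorgroup_is_group)
  let ?\<psi> = "\<lambda>g. ?R #> commutator G u g"
  let ?T = "{g \<in> carrier G. ?\<psi> g [^]\<^bsub>G Mod ?R\<^esub> n = \<one>\<^bsub>G Mod ?R\<^esub>}"
  have \<psi>: "?\<psi> \<in> hom G (G Mod ?R)"
    by (rule commutator_hom_mod_lcs_aux[OF u])
  have T: "subgroup ?T G"
  proof (rule subgroup_power_kernel[OF subgroup_self Q.is_group \<psi>])
    fix a b assume "a \<in> carrier G" "b \<in> carrier G"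
    then show "?\<psi> a \<otimes>\<^bsub>G Mod ?R\<^esub> ?\<psi> b = ?\<psi> b \<otimes>\<^bsub>G Mod ?R\<^esub> ?\<psi> a"
      using lcs_aux_central_mod_Suc[OF commutator_in_lcs_aux_Suc[OF u], of a "commutator G u b"]
        lcs_aux_closed[OF u]
      by (simp add: R.rcos_sum)
  qed
  have "S \<subseteq> ?T"
  proof
    fix x assume x: "x \<in> S"
    then have xc: "x \<in> carrier G"
      using S(1) by blast
    have "?\<psi> x [^]\<^bsub>G Mod ?R\<^esub> n = ?\<psi> (x [^] n)"
      using hom_nat_pow[OF \<psi> xc is_group Q.is_group] by simp
    also have "\<dots> = \<one>\<^bsub>G Mod ?R\<^esub>"
      using S(3)[OF x] hom_one[OF \<psi> is_group Q.is_group] by simp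
    finally show "x \<in> ?T"
      using xc by simp
  qed
  with generate_subgroup_incl[OF this T] S(2) g have "?\<psi> g [^]\<^bsub>G Mod ?R\<^esub> n = \<one>\<^bsub>G Mod ?R\<^esub>"
    by blast
  then show ?thesis
    using R.FactGroup_pow R.rcos_eq_self_iff lcs_aux_closed[OF u] g by simp
qed

lemma pow_lcs_aux_Suc_of_generators:
  assumes S: "S \<subseteq> carrier G" "generate G S = carrier G" "\<And>x. x \<in> S \<Longrightarrow> x [^] n = \<one>"
    and w: "w \<in> lcs_aux G j"
  shows "w [^] (n::nat) \<in> lcs_aux G (Suc j)"
proof -
  let ?K = "{w \<in> lcs_aux G j. w [^] n \<in> lcs_aux G (Suc j)}"
  have "lcs_aux G j \<subseteq> ?K"
  proof (cases j)
    case 0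
    have "S \<subseteq> ?K"
      using S 0 subgroup.one_closed[OF lcs_aux_subgroup] by auto
    from generate_subgroup_incl[OF this subgroup_pow_in_lcs_aux_Suc] show ?thesis
      using S(2) 0 by simp
  next
    case (Suc j')
    have "{commutator G u g | u g. u \<in> lcs_aux G j' \<and> g \<in> carrier G} \<subseteq> ?K"
      using commutator_pow_in_lcs_aux[OF S] commutator_in_lcs_aux_Suc Suc by blast
    from generate_subgroup_incl[OF this subgroup_pow_in_lcs_aux_Suc] show ?thesis
      unfolding Suc lcs_aux.simps(2)[of G j'] commutator_subgroup_eq_generate .
  qed
  with w show ?thesis
    by blast
qed

lemma pow_lcs_aux_of_generators:
  assumes "S \<subseteq> carrier G" "generate G S = carrier G" "\<And>x. x \<in> S \<Longrightarrow> x [^] n = \<one>"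
    and "h \<in> carrier G"
  shows "h [^] ((n::nat) ^ j) \<in> lcs_aux G j"
proof (induction j)
  case (Suc j)
  have "(h [^] (n ^ j)) [^] n \<in> lcs_aux G (Suc j)"
    using pow_lcs_aux_Suc_of_generators[OF assms(1-3) Suc.IH] .
  then show ?case
    using assms(4) by (simp add: nat_pow_pow mult.commute)
qed (use assms(4) in simp)

lemma pow_lcs_aux_generate:
  assumes S: "S \<subseteq> carrier G" "\<And>x. x \<in> S \<Longrightarrow> x [^] n = \<one>" and h: "h \<in> generate G S"
  shows "h [^] ((n::nat) ^ j) \<in> lcs_aux G j"
proof -
  let ?K = "subgroup_generated G S"
  interpret K: group ?K
    by (rule group_subgroup_generated)
  have carrier_K: "carrier ?K = generate G S"
    using S(1) by (simp add: carrier_subgroup_generated Int_absorb1)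
  have "generate ?K S = carrier ?K"
    using subgroup_generated2[of S] S(1) carrier_K
    by (metis carrier_subgroup_generated generate.incl inf.absorb_iff2 subsetI)
  moreover have "S \<subseteq> carrier ?K"
    using carrier_K by (auto intro: generate.incl)
  ultimately have "h [^]\<^bsub>?K\<^esub> (n ^ j) \<in> lcs_aux ?K j"
    using K.pow_lcs_aux_of_generators[of S n h j] S h carrier_K by (simp add: pow_subgroup_generated)
  moreover have "group_hom ?K G id"
    using canonical_inj_is_hom[OF subgroup_subgroup_generated[of S]] by (simp add: subgroup_generated_def)
  then have "lcs_aux ?K j \<subseteq> lcs_aux G j"
    using group_hom.image_lcs_aux_subset[of ?K G id j] by simp
  ultimately show ?thesis
    by (auto simp: pow_subgroup_generated)
qed

lemma pow_lcs_aux_generate_mod: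
  assumes S: "S \<subseteq> carrier G" "\<And>x. x \<in> S \<Longrightarrow> x [^] n \<in> lcs_aux G i" and h: "h \<in> generate G S"
  shows "h [^] ((n::nat) ^ i) \<in> lcs_aux G i"
proof -
  let ?N = "lcs_aux G i"
  interpret N: normal ?N G
    by (rule lcs_aux_normal)
  interpret Q: group "G Mod ?N"
    by (rule N.factorgroup_is_group)
  have q: "group_hom G (G Mod ?N) (\<lambda>x. ?N #> x)"
    by (simp add: group_hom_def group_hom_axioms_def is_group Q.is_group N.r_coset_hom_Mod)
  have hc: "h \<in> carrier G"
    using generate_in_carrier[OF S(1) h] .
  have "?N #> h \<in> generate (G Mod ?N) ((\<lambda>x. ?N #> x) ` S)"
    using group_hom.generate_img[OF q S(1)] h by simp
  moreover have "x [^]\<^bsub>G Mod ?N\<^esub> n = \<one>\<^bsub>G Mod ?N\<^esub>" if x: "x \<in> (\<lambda>x. ?N #> x) ` S" for x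
  proof -
    obtain y where y: "y \<in> S" "x = ?N #> y"
      using x by blast
    then have "x [^]\<^bsub>G Mod ?N\<^esub> n = ?N #> (y [^] n)"
      using N.FactGroup_pow S(1) by blast
    also have "\<dots> = ?N"
      using N.rcos_eq_self_iff S y(1) by blast
    finally show ?thesis
      by simp
  qed
  ultimately have "(?N #> h) [^]\<^bsub>G Mod ?N\<^esub> (n ^ i) \<in> lcs_aux (G Mod ?N) i"
    using S(1) by (intro Q.pow_lcs_aux_generate) (auto simp: carrier_FactGroup)
  also have "lcs_aux (G Mod ?N) i = (\<lambda>x. ?N #> x) ` ?N"
    using group_hom.image_lcs_aux_eq[OF q] by (simp add: carrier_FactGroup)
  finally obtain x where x: "x \<in> ?N" "?N #> (h [^] (n ^ i)) = ?N #> x"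
    using N.FactGroup_pow[OF hc] by auto
  then show ?thesis
    using N.rcos_const[OF is_group x(1)] N.rcos_eq_self_iff[of "h [^] (n ^ i)"] hc by simp
qed

lemma rational_lower_central_Suc:
  "rational_lower_central G (Suc i) = {x \<in> carrier G. \<exists>k::nat. k \<ge> 1 \<and> x [^] k \<in> lcs_aux G i}"
  by (cases i) (auto simp: rational_lower_central_def lower_central_def intro: exI[of _ 1])

lemma rational_lower_central_subgroup: "subgroup (rational_lower_central G m) G"
proof (cases m)
  case 0
  then show ?thesis
    by (simp add: rational_lower_central_def subgroup_self)
next
  case (Suc i)
  let ?L = "lcs_aux G i"
  have L: "subgroup ?L G"
    by (rule lcs_aux_subgroup)
  show ?thesis
    unfolding Suc rational_lower_central_Suc
  proof (rule subgroupI)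
    show "{x \<in> carrier G. \<exists>k::nat. k \<ge> 1 \<and> x [^] k \<in> ?L} \<noteq> {}"
      using subgroup.one_closed[OF L] by force
  next
    fix x assume "x \<in> {x \<in> carrier G. \<exists>k::nat. k \<ge> 1 \<and> x [^] k \<in> ?L}"
    then show "inv x \<in> {x \<in> carrier G. \<exists>k::nat. k \<ge> 1 \<and> x [^] k \<in> ?L}"
      using subgroup.m_inv_closed[OF L] by (auto simp: nat_pow_inv)
  next
    fix x y
    assume "x \<in> {x \<in> carrier G. \<exists>k::nat. k \<ge> 1 \<and> x [^] k \<in> ?L}"
      and "y \<in> {x \<in> carrier G. \<exists>k::nat. k \<ge> 1 \<and> x [^] k \<in> ?L}"
    then obtain k l :: nat where x: "x \<in> carrier G" "k \<ge> 1" "x [^] k \<in> ?L"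
      and y: "y \<in> carrier G" "l \<ge> 1" "y [^] l \<in> ?L"
      by blast
    have "z [^] (k * l) \<in> ?L" if "z \<in> {x, y}" for z
      using that subgroup_nat_pow_closed[OF L x(3), of l] subgroup_nat_pow_closed[OF L y(3), of k] x(1) y(1)
      by (auto simp: nat_pow_pow mult.commute)
    moreover have "x \<otimes> y \<in> generate G {x, y}"
      by (intro generate.eng generate.incl) simp_all
    ultimately have "(x \<otimes> y) [^] ((k * l) ^ i) \<in> ?L"
      using x(1) y(1) by (intro pow_lcs_aux_generate_mod) auto
    moreover have "(k * l) ^ i \<ge> 1"
      using x(2) y(2) by simp
    ultimately show "x \<otimes> y \<in> {x \<in> carrier G. \<exists>k::nat. k \<ge> 1 \<and> x [^] k \<in> ?L}"
      using x(1) y(1) by blast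
  qed auto
qed

end

section \<open>Semidirect products\<close>

locale semidirect = A: group A + C: group C
  for A :: "('a, 'x) monoid_scheme" and C :: "('c, 'y) monoid_scheme" +
  fixes \<phi> :: "'c \<Rightarrow> 'a \<Rightarrow> 'a"
  assumes action: "\<phi> \<in> hom C (AutoGroup A)"
begin

abbreviation G :: "('a \<times> 'c) monoid" where
  "G \<equiv> semidirect_product A C \<phi>"

lemma action_group_hom: "c \<in> carrier C \<Longrightarrow> group_hom A A (\<phi> c)"
  using hom_in_carrier[OF action]
  by (simp add: AutoGroup_def BijGroup_def auto_def group_hom_def group_hom_axioms_def A.is_group)

lemma action_closed [simp]: "c \<in> carrier C \<Longrightarrow> a \<in> carrier A \<Longrightarrow> \<phi> c a \<in> carrier A"
  using group_hom.hom_closed[OF action_group_hom] .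

lemma action_mult [simp]:
  "c \<in> carrier C \<Longrightarrow> a \<in> carrier A \<Longrightarrow> b \<in> carrier A \<Longrightarrow> \<phi> c (a \<otimes>\<^bsub>A\<^esub> b) = \<phi> c a \<otimes>\<^bsub>A\<^esub> \<phi> c b"
  using group_hom.hom_mult[OF action_group_hom] .

lemma action_inv [simp]: "c \<in> carrier C \<Longrightarrow> a \<in> carrier A \<Longrightarrow> \<phi> c (inv\<^bsub>A\<^esub> a) = inv\<^bsub>A\<^esub> (\<phi> c a)"
  using group_hom.hom_inv[OF action_group_hom] .

lemma action_one [simp]: "c \<in> carrier C \<Longrightarrow> \<phi> c \<one>\<^bsub>A\<^esub> = \<one>\<^bsub>A\<^esub>"
  using group_hom.hom_one[OF action_group_hom] .

lemma action_compose [simp]: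
  assumes "c \<in> carrier C" "d \<in> carrier C" "a \<in> carrier A"
  shows "\<phi> (c \<otimes>\<^bsub>C\<^esub> d) a = \<phi> c (\<phi> d a)"
proof -
  have "\<phi> (c \<otimes>\<^bsub>C\<^esub> d) = compose (carrier A) (\<phi> c) (\<phi> d)"
    using hom_mult[OF action assms(1,2)] hom_in_carrier[OF action] assms(1,2)
    by (simp add: AutoGroup_def BijGroup_def auto_def)
  then show ?thesis
    using assms(3) by (simp add: compose_def)
qed

lemma action_by_one [simp]: "a \<in> carrier A \<Longrightarrow> \<phi> \<one>\<^bsub>C\<^esub> a = a"
  using hom_one[OF action C.is_group A.AutoGroup] by (simp add: AutoGroup_def BijGroup_def)

lemma action_inv_cancel [simp]:
  "c \<in> carrier C \<Longrightarrow> a \<in> carrier A \<Longrightarrow> \<phi> (inv\<^bsub>C\<^esub> c) (\<phi> c a) = a"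
  "c \<in> carrier C \<Longrightarrow> a \<in> carrier A \<Longrightarrow> \<phi> c (\<phi> (inv\<^bsub>C\<^esub> c) a) = a"
  using action_compose[of "inv\<^bsub>C\<^esub> c" c a] action_compose[of c "inv\<^bsub>C\<^esub> c" a] by simp_all

lemma carrier_G [simp]: "carrier G = carrier A \<times> carrier C"
  by (simp add: semidirect_product_def)

lemma mult_G [simp]: "(a, c) \<otimes>\<^bsub>G\<^esub> (b, d) = (a \<otimes>\<^bsub>A\<^esub> \<phi> c b, c \<otimes>\<^bsub>C\<^esub> d)"
  by (simp add: semidirect_product_def)

lemma one_G [simp]: "\<one>\<^bsub>G\<^esub> = (\<one>\<^bsub>A\<^esub>, \<one>\<^bsub>C\<^esub>)"
  by (simp add: semidirect_product_def)

lemma group_G: "group G"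
proof (rule groupI)
  fix x assume "x \<in> carrier G"
  then obtain a c where "x = (a, c)" "a \<in> carrier A" "c \<in> carrier C"
    by auto
  then show "\<exists>y \<in> carrier G. y \<otimes>\<^bsub>G\<^esub> x = \<one>\<^bsub>G\<^esub>"
    by (intro bexI[of _ "(\<phi> (inv\<^bsub>C\<^esub> c) (inv\<^bsub>A\<^esub> a), inv\<^bsub>C\<^esub> c)"]) simp_all
qed (auto simp: A.m_assoc C.m_assoc)

sublocale G: group G
  by (rule group_G)

lemma inv_G [simp]:
  "a \<in> carrier A \<Longrightarrow> c \<in> carrier C \<Longrightarrow> inv\<^bsub>G\<^esub> (a, c) = (\<phi> (inv\<^bsub>C\<^esub> c) (inv\<^bsub>A\<^esub> a), inv\<^bsub>C\<^esub> c)"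
  by (rule G.inv_equality) simp_all

lemma commutator_G:
  assumes "a \<in> carrier A" "b \<in> carrier A" "c \<in> carrier C" "d \<in> carrier C"
  shows "commutator G (a, c) (b, d) =
    (a \<otimes>\<^bsub>A\<^esub> \<phi> c b \<otimes>\<^bsub>A\<^esub> \<phi> (c \<otimes>\<^bsub>C\<^esub> d \<otimes>\<^bsub>C\<^esub> inv\<^bsub>C\<^esub> c) (inv\<^bsub>A\<^esub> a)
       \<otimes>\<^bsub>A\<^esub> \<phi> (commutator C c d) (inv\<^bsub>A\<^esub> b),
     commutator C c d)"
  using assms by (simp add: commutator_def A.m_assoc)

lemma inl_hom: "(\<lambda>a. (a, \<one>\<^bsub>C\<^esub>)) \<in> hom A G"
  by (auto simp: hom_def)

lemma inr_hom: "(\<lambda>c. (\<one>\<^bsub>A\<^esub>, c)) \<in> hom C G"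
  by (auto simp: hom_def)

lemma snd_hom: "snd \<in> hom G C"
  by (auto simp: hom_def)


lemma action_lcs_aux: "c \<in> carrier C \<Longrightarrow> x \<in> lcs_aux A i \<Longrightarrow> \<phi> c x \<in> lcs_aux A i"
  using group_hom.image_lcs_aux_subset[OF action_group_hom] by blast

lemma subgroup_times:
  assumes H: "subgroup H A" and K: "subgroup K C"
    and invariant: "\<And>c a. c \<in> carrier C \<Longrightarrow> a \<in> H \<Longrightarrow> \<phi> c a \<in> H"
  shows "subgroup (H \<times> K) G"
proof (rule G.subgroupI)
  show "H \<times> K \<subseteq> carrier G"
    using subgroup.subset[OF H] subgroup.subset[OF K] by auto
  show "H \<times> K \<noteq> {}"
    using subgroup.one_closed[OF H] subgroup.one_closed[OF K] by blast
next
  fix x assume "x \<in> H \<times> K"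
  then obtain a c where "x = (a, c)" "a \<in> H" "c \<in> K"
    by blast
  then show "inv\<^bsub>G\<^esub> x \<in> H \<times> K"
    using H K invariant by (auto simp: subgroup.mem_carrier subgroup.m_inv_closed)
next
  fix x y assume "x \<in> H \<times> K" "y \<in> H \<times> K"
  then obtain a c b d where "x = (a, c)" "y = (b, d)" "a \<in> H" "b \<in> H" "c \<in> K" "d \<in> K"
    by blast
  then show "x \<otimes>\<^bsub>G\<^esub> y \<in> H \<times> K"
    using H K invariant by (auto simp: subgroup.mem_carrier subgroup.m_closed)
qed

lemma lcs_aux_times_subset: "lcs_aux A i \<times> lcs_aux C i \<subseteq> lcs_aux G i"
proof clarify
  fix a c assume a: "a \<in> lcs_aux A i" and c: "c \<in> lcs_aux C i"
  have "(a, \<one>\<^bsub>C\<^esub>) \<in> lcs_aux G i"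
    using group_hom.image_lcs_aux_subset[of A G "\<lambda>a. (a, \<one>\<^bsub>C\<^esub>)" i] a
    by (auto simp: group_hom_def group_hom_axioms_def A.is_group G.is_group inl_hom)
  moreover have "(\<one>\<^bsub>A\<^esub>, c) \<in> lcs_aux G i"
    using group_hom.image_lcs_aux_subset[of C G "\<lambda>c. (\<one>\<^bsub>A\<^esub>, c)" i] c
    by (auto simp: group_hom_def group_hom_axioms_def C.is_group G.is_group inr_hom)
  ultimately have "(a, \<one>\<^bsub>C\<^esub>) \<otimes>\<^bsub>G\<^esub> (\<one>\<^bsub>A\<^esub>, c) \<in> lcs_aux G i"
    by (rule subgroup.m_closed[OF G.lcs_aux_subgroup])
  then show "(a, c) \<in> lcs_aux G i"
    using A.lcs_aux_closed[OF a] C.lcs_aux_closed[OF c] by simp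
qed

lemma subgroup_acting_trivially_mod:
  "subgroup {c \<in> carrier C. \<forall>a \<in> carrier A. N #>\<^bsub>A\<^esub> \<phi> c a = N #>\<^bsub>A\<^esub> a} C"
proof (rule C.subgroupI)
  fix c assume "c \<in> {c \<in> carrier C. \<forall>a \<in> carrier A. N #>\<^bsub>A\<^esub> \<phi> c a = N #>\<^bsub>A\<^esub> a}"
  then have c: "c \<in> carrier C" and fixed: "\<And>a. a \<in> carrier A \<Longrightarrow> N #>\<^bsub>A\<^esub> \<phi> c a = N #>\<^bsub>A\<^esub> a"
    by auto
  have "N #>\<^bsub>A\<^esub> \<phi> (inv\<^bsub>C\<^esub> c) a = N #>\<^bsub>A\<^esub> a" if "a \<in> carrier A" for a
    using fixed[of "\<phi> (inv\<^bsub>C\<^esub> c) a"] c that by simp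
  then show "inv\<^bsub>C\<^esub> c \<in> {c \<in> carrier C. \<forall>a \<in> carrier A. N #>\<^bsub>A\<^esub> \<phi> c a = N #>\<^bsub>A\<^esub> a}"
    using c by simp
qed auto

end

locale semidirect_abelianization_trivial = semidirect +
  assumes abelianization_trivial: "\<And>c a. c \<in> carrier C \<Longrightarrow> a \<in> carrier A \<Longrightarrow>
    derived A (carrier A) #>\<^bsub>A\<^esub> \<phi> c a = derived A (carrier A) #>\<^bsub>A\<^esub> a"
begin

lemma action_trivial_mod_lcs_1: "c \<in> carrier C \<Longrightarrow> trivial_mod_lcs A 1 (\<phi> c)"
  using abelianization_trivial action_group_hom
  by (simp add: trivial_mod_lcs_def derived_carrier_eq_lcs_aux_1 group_hom.homh)

lemma lcs_aux_action_trivial_mod_lcs: "c \<in> lcs_aux C j \<Longrightarrow> trivial_mod_lcs A (Suc j) (\<phi> c)"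
proof (induction j arbitrary: c)
  case 0
  then show ?case
    using action_trivial_mod_lcs_1 by simp
next
  case (Suc j)
  let ?N = "lcs_aux A (Suc (Suc j))"
  let ?S = "{c \<in> carrier C. \<forall>a \<in> carrier A. ?N #>\<^bsub>A\<^esub> \<phi> c a = ?N #>\<^bsub>A\<^esub> a}"
  have "commutator C c d \<in> ?S" if c: "c \<in> lcs_aux C j" and d: "d \<in> carrier C" for c d
  proof -
    have cc: "c \<in> carrier C"
      using c by (rule C.lcs_aux_closed)
    have "?N #>\<^bsub>A\<^esub> \<phi> (commutator C c d) a = ?N #>\<^bsub>A\<^esub> a" if a: "a \<in> carrier A" for a
    proof -
      define y where "y = \<phi> (inv\<^bsub>C\<^esub> c) (\<phi> (inv\<^bsub>C\<^esub> d) a)"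
      have y: "y \<in> carrier A"
        using cc d a by (simp add: y_def)
      have "\<phi> (commutator C c d) a = \<phi> c (\<phi> d y)" and "\<phi> d (\<phi> c y) = a"
        using cc d a by (simp_all add: commutator_def y_def)
      then show ?thesis
        using A.trivial_mod_lcs_commute[OF Suc.IH[OF c] action_trivial_mod_lcs_1[OF d] y] by simp
    qed
    then show ?thesis
      using cc d by simp
  qed
  then have "lcs_aux C (Suc j) \<subseteq> ?S"
    unfolding lcs_aux.simps(2)[of C j] commutator_subgroup_eq_generate
    by (intro C.generate_subgroup_incl subgroup_acting_trivially_mod) blast
  then show ?case
    using Suc.prems action_group_hom by (auto simp: trivial_mod_lcs_def group_hom.homh)
qed

lemma lcs_aux_subset_times: "lcs_aux G i \<subseteq> lcs_aux A i \<times> lcs_aux C i"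
proof (induction i)
  case (Suc i)
  let ?N = "lcs_aux A (Suc i)"
  interpret N: normal ?N A
    by (rule A.lcs_aux_normal)
  have "commutator G x y \<in> ?N \<times> lcs_aux C (Suc i)" if x: "x \<in> lcs_aux G i" and y: "y \<in> carrier G" for x y
  proof -
    obtain a c where x_eq: "x = (a, c)" and a: "a \<in> lcs_aux A i" and c: "c \<in> lcs_aux C i"
      using x Suc.IH by blast
    obtain b d where y_eq: "y = (b, d)" and b: "b \<in> carrier A" and d: "d \<in> carrier C"
      using y by auto
    have ac: "a \<in> carrier A" and cc: "c \<in> carrier C"
      using a c by (simp_all add: A.lcs_aux_closed C.lcs_aux_closed)
    have cd: "commutator C c d \<in> lcs_aux C (Suc i)"
      using c d by (rule C.commutator_in_lcs_aux_Suc)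
    have "?N #>\<^bsub>A\<^esub> \<phi> c b = ?N #>\<^bsub>A\<^esub> b"
      using lcs_aux_action_trivial_mod_lcs[OF c] b by (simp add: trivial_mod_lcs_def)
    moreover have "?N #>\<^bsub>A\<^esub> \<phi> (c \<otimes>\<^bsub>C\<^esub> d \<otimes>\<^bsub>C\<^esub> inv\<^bsub>C\<^esub> c) (inv\<^bsub>A\<^esub> a) = ?N #>\<^bsub>A\<^esub> inv\<^bsub>A\<^esub> a"
      using A.trivial_mod_lcs_on_lcs_aux[OF action_trivial_mod_lcs_1 subgroup.m_inv_closed[OF A.lcs_aux_subgroup a]]
        cc d by simp
    moreover have "?N #>\<^bsub>A\<^esub> \<phi> (commutator C c d) (inv\<^bsub>A\<^esub> b) = ?N #>\<^bsub>A\<^esub> inv\<^bsub>A\<^esub> b"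
      using lcs_aux_action_trivial_mod_lcs[OF subsetD[OF C.lcs_aux_Suc_subset cd]] b
      by (simp add: trivial_mod_lcs_def)
    ultimately have "?N #>\<^bsub>A\<^esub> (a \<otimes>\<^bsub>A\<^esub> \<phi> c b \<otimes>\<^bsub>A\<^esub> \<phi> (c \<otimes>\<^bsub>C\<^esub> d \<otimes>\<^bsub>C\<^esub> inv\<^bsub>C\<^esub> c) (inv\<^bsub>A\<^esub> a)
        \<otimes>\<^bsub>A\<^esub> \<phi> (commutator C c d) (inv\<^bsub>A\<^esub> b)) = ?N #>\<^bsub>A\<^esub> commutator A a b"
      unfolding commutator_def using ac b cc d
      by (intro N.rcos_mult_cong) (simp_all del: action_compose)
    also have "\<dots> = ?N"
      using N.rcos_eq_self_iff A.commutator_in_lcs_aux_Suc[OF a b] ac b by simp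
    finally show ?thesis
      using x_eq y_eq ac b cc d cd N.rcos_eq_self_iff by (simp add: commutator_G)
  qed
  then show ?case
    unfolding lcs_aux.simps(2)[of G i] commutator_subgroup_eq_generate
    by (intro G.generate_subgroup_incl subgroup_times A.lcs_aux_subgroup C.lcs_aux_subgroup action_lcs_aux)
      blast+
qed simp

lemma lcs_aux_semidirect: "lcs_aux G i = lcs_aux A i \<times> lcs_aux C i"
  using lcs_aux_subset_times lcs_aux_times_subset by blast


lemma lower_central_semidirect: "lower_central G m = lower_central A m \<times> lower_central C m"
  by (simp add: lower_central_def lcs_aux_semidirect)

lemma inl_in_rational_lower_central_iff:
  assumes a: "a \<in> carrier A"
  shows "(a, \<one>\<^bsub>C\<^esub>) \<in> rational_lower_central G (Suc i) \<longleftrightarrow> a \<in> rational_lower_central A (Suc i)"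
proof -
  have "(a, \<one>\<^bsub>C\<^esub>) [^]\<^bsub>G\<^esub> k = (a [^]\<^bsub>A\<^esub> k, \<one>\<^bsub>C\<^esub>)" for k :: nat
    using hom_nat_pow[OF inl_hom a A.is_group G.is_group] by simp
  then show ?thesis
    using a subgroup.one_closed[OF C.lcs_aux_subgroup]
    by (simp add: A.rational_lower_central_Suc G.rational_lower_central_Suc lcs_aux_semidirect)
qed

lemma inr_in_rational_lower_central_iff:
  assumes c: "c \<in> carrier C"
  shows "(\<one>\<^bsub>A\<^esub>, c) \<in> rational_lower_central G (Suc i) \<longleftrightarrow> c \<in> rational_lower_central C (Suc i)"
proof -
  have "(\<one>\<^bsub>A\<^esub>, c) [^]\<^bsub>G\<^esub> k = (\<one>\<^bsub>A\<^esub>, c [^]\<^bsub>C\<^esub> k)" for k :: nat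
    using hom_nat_pow[OF inr_hom c C.is_group G.is_group] by simp
  then show ?thesis
    using c subgroup.one_closed[OF A.lcs_aux_subgroup]
    by (simp add: C.rational_lower_central_Suc G.rational_lower_central_Suc lcs_aux_semidirect)
qed

lemma rational_lower_central_semidirect:
  assumes "m \<ge> 1"
  shows "rational_lower_central G m = rational_lower_central A m \<times> rational_lower_central C m"
proof -
  obtain i where m: "m = Suc i"
    using assms by (cases m) auto
  interpret D: subgroup "rational_lower_central G m" G
    by (rule G.rational_lower_central_subgroup)
  show ?thesis
  proof (intro equalityI subsetI)
    fix x assume x: "x \<in> rational_lower_central G m"
    then obtain a c where x_eq: "x = (a, c)" and a: "a \<in> carrier A" and c: "c \<in> carrier C"
      using D.subset by auto
    obtain k :: nat where "k \<ge> 1" and "(a, c) [^]\<^bsub>G\<^esub> k \<in> lcs_aux A i \<times> lcs_aux C i"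
      using x x_eq by (auto simp: m G.rational_lower_central_Suc lcs_aux_semidirect)
    moreover have "snd ((a, c) [^]\<^bsub>G\<^esub> k) = c [^]\<^bsub>C\<^esub> k"
      using hom_nat_pow[OF snd_hom _ G.is_group C.is_group] a c by simp
    ultimately have c_rat: "c \<in> rational_lower_central C m"
      using c by (auto simp: m C.rational_lower_central_Suc mem_Times_iff)
    then have "(a, c) \<otimes>\<^bsub>G\<^esub> inv\<^bsub>G\<^esub> (\<one>\<^bsub>A\<^esub>, c) \<in> rational_lower_central G m"
      using x x_eq c inr_in_rational_lower_central_iff[of c i, folded m]
      by (simp add: D.m_closed D.m_inv_closed del: inv_G)
    then have "a \<in> rational_lower_central A m"
      using inl_in_rational_lower_central_iff[of a i, folded m] a c by simp
    with c_rat show "x \<in> rational_lower_central A m \<times> rational_lower_central C m"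
      using x_eq by simp
  next
    fix x assume "x \<in> rational_lower_central A m \<times> rational_lower_central C m"
    then obtain a c where x_eq: "x = (a, c)" and a: "a \<in> rational_lower_central A m"
      and c: "c \<in> rational_lower_central C m"
      by blast
    have ac: "a \<in> carrier A" "c \<in> carrier C"
      using a c by (simp_all add: m A.rational_lower_central_Suc C.rational_lower_central_Suc)
    then have "(a, \<one>\<^bsub>C\<^esub>) \<otimes>\<^bsub>G\<^esub> (\<one>\<^bsub>A\<^esub>, c) \<in> rational_lower_central G m"
      using inl_in_rational_lower_central_iff[of a i, folded m] inr_in_rational_lower_central_iff[of c i, folded m] a c
      by (simp add: D.m_closed del: mult_G)
    then show "x \<in> rational_lower_central G m"
      using x_eq ac by simp
  qed
qed
end

theorem proposition3p2:
  fixes A :: "('a, 'x) monoid_scheme" and C :: "('c, 'y) monoid_scheme"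
    and \<phi> :: "'c \<Rightarrow> 'a \<Rightarrow> 'a"
  assumes "group A" and "group C"
    and "\<phi> \<in> hom C (AutoGroup A)"
    and "\<And>c a. c \<in> carrier C \<Longrightarrow> a \<in> carrier A \<Longrightarrow>
           derived A (carrier A) #>\<^bsub>A\<^esub> (\<phi> c a) = derived A (carrier A) #>\<^bsub>A\<^esub> a"
    and "m \<ge> 1"
  shows "lower_central (semidirect_product A C \<phi>) m = lower_central A m \<times> lower_central C m
       \<and> rational_lower_central (semidirect_product A C \<phi>) m
           = rational_lower_central A m \<times> rational_lower_central C m"
proof -
  interpret semidirect_abelianization_trivial A C \<phi>
    using assms(1-4) by (simp add: semidirect_abelianization_trivial_def semidirect_def
      semidirect_abelianization_trivial_axioms_def semidirect_axioms_def)
  show ?thesis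
    using lower_central_semidirect rational_lower_central_semidirect[OF assms(5)] by blast
qed

end
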